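(* Let $c\in\mathbb{N}$ and let $\beta$ be a parameter. Consider the recurrence $$x_{n+4}x_n=x_{n+3}x_{n+1}+\beta\,x_{n+2}^c,$$ corresponding to iteration of the rational map $\varphi:(x_0,x_1,x_2,x_3)\mapsto\big(x_1,x_2,x_3,(x_1x_3+\beta x_2^c)/x_0\big)$ (and its inverse for negative $n$). Then: (i) (Laurent property) $x_n\in\mathbb{Z}[x_0^{\pm1},x_1^{\pm1},x_2^{\pm1},x_3^{\pm1},\beta]$ for all $n\in\mathbb{Z}$; (ii) the recurrence satisfies the singularity confinement test: if for some $n$ one has $x_{n+4}=\epsilon\to 0$ (so that $x_{n+8}$ is potentially singular), then $x_{n+8}=O(1)$ as $\epsilon\to0$; (iii) $\varphi$ is a Poisson map with respect to the log-canonical Poisson bracket $\{\cdot,\cdot\}_c$ defined by $\{x_0,x_1\}_c=x_0x_1$, $\{x_0,x_2\}_c=c\,x_0x_2$, $\{x_0,x_3\}_c=(c+1)x_0x_3$, $\{x_1,x_2\}_c=x_1x_2$, $\{x_1,x_3\}_c=c\,x_1x_3$, $\{x_2,x_3\}_c=x_2x_3$, and this bracket is nondegenerate for $c\neq 2$.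
   Context: Here $\mathbb{N}$ includes $0$ (the paper treats the cases $c=0,1,2,\ldots$). The bracket is extended to rational functions of $x_0,x_1,x_2,x_3$ by bilinearity and the Leibniz rule. A map is Poisson if it preserves the bracket. *)

theory Defs
  imports "HOL-Analysis.Analysis"
begin

definition phi :: "nat \<Rightarrow> complex \<Rightarrow> complex^4 \<Rightarrow> complex^4" where
  "phi c \<beta> x = (\<chi> i. if i = 0 then x$1 else if i = 1 then x$2 else if i = 2 then x$3
                   else (x$1 * x$3 + \<beta> * (x$2)^c) / x$0)"

definition phiinv :: "nat \<Rightarrow> complex \<Rightarrow> complex^4 \<Rightarrow> complex^4" where
  "phiinv c \<beta> x = (\<chi> i. if i = 0 then (x$0 * x$2 + \<beta> * (x$1)^c) / x$3
                   else if i = 1 then x$0 else if i = 2 then x$1 else x$2)"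

definition xseq :: "nat \<Rightarrow> complex \<Rightarrow> complex^4 \<Rightarrow> int \<Rightarrow> complex" where
  "xseq c \<beta> u n = (if 0 \<le> n then ((phi c \<beta> ^^ nat n) u) $ 0
                    else ((phiinv c \<beta> ^^ nat (- n)) u) $ 0)"

text \<open>The ring Z[x0^{\<plusminus>1},x1^{\<plusminus>1},x2^{\<plusminus>1},x3^{\<plusminus>1},beta], realised as functions of (x, beta):
  the smallest set of functions containing the integer constants, the coordinates x_i,
  their inverses 1/x_i and beta, closed under addition and multiplication.\<close>
inductive_set laurent :: "(complex^4 \<Rightarrow> complex \<Rightarrow> complex) set" where
  const: "(\<lambda>x b. of_int k) \<in> laurent"
| var: "(\<lambda>x b. x $ i) \<in> laurent"
| inv: "(\<lambda>x b. inverse (x $ i)) \<in> laurent"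
| par: "(\<lambda>x b. b) \<in> laurent"
| add: "f \<in> laurent \<Longrightarrow> g \<in> laurent \<Longrightarrow> (\<lambda>x b. f x b + g x b) \<in> laurent"
| mult: "f \<in> laurent \<Longrightarrow> g \<in> laurent \<Longrightarrow> (\<lambda>x b. f x b * g x b) \<in> laurent"

definition pderiv4 :: "4 \<Rightarrow> (complex^4 \<Rightarrow> complex) \<Rightarrow> complex^4 \<Rightarrow> complex" where
  "pderiv4 k f x = deriv (\<lambda>t. f (\<chi> m. if m = k then t else x $ m)) (x $ k)"

text \<open>Coefficient matrix C_c of the log-canonical bracket: {x_i,x_j}_c = C_ij x_i x_j.\<close>
definition lc_coeff :: "nat \<Rightarrow> complex^4^4" where
  "lc_coeff c = (\<chi> i j.
     if i = 0 \<and> j = 1 then 1 else if i = 0 \<and> j = 2 then of_nat c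
     else if i = 0 \<and> j = 3 then of_nat c + 1
     else if i = 1 \<and> j = 2 then 1 else if i = 1 \<and> j = 3 then of_nat c
     else if i = 2 \<and> j = 3 then 1
     else if i = 1 \<and> j = 0 then -1 else if i = 2 \<and> j = 0 then - of_nat c
     else if i = 3 \<and> j = 0 then - (of_nat c + 1)
     else if i = 2 \<and> j = 1 then -1 else if i = 3 \<and> j = 1 then - of_nat c
     else if i = 3 \<and> j = 2 then -1
     else 0)"

definition lc_bracket :: "nat \<Rightarrow> complex^4 \<Rightarrow> complex^4^4" where
  "lc_bracket c x = (\<chi> i j. lc_coeff c $ i $ j * x $ i * x $ j)"

text \<open>Bracket of two (rational) functions, extended by bilinearity and the Leibniz rule.\<close>
definition pbr :: "nat \<Rightarrow> (complex^4 \<Rightarrow> complex) \<Rightarrow> (complex^4 \<Rightarrow> complex) \<Rightarrow> complex^4 \<Rightarrow> complex" where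
  "pbr c f g x = (\<Sum>k\<in>UNIV. \<Sum>l\<in>UNIV. pderiv4 k f x * lc_bracket c x $ k $ l * pderiv4 l g x)"

end

(*
  (i) Work in the fraction field of R = Z[x0,x1,x2,x3,beta] and in its localisation
  L = R[(x0 x1 x2 x3)^-1]. By induction every term x_n of the generic orbit lies in L: writing
  x_(m+8) = N / x_(m+4), the numerator satisfies N x_(m+3) x_(m+2)^c x_(m+1) = 0 modulo x_(m+4),
  and x_(m+4) is coprime in L to x_(m+1), x_(m+2) and x_(m+3). These coprimality statements are
  proved along the same induction from the recurrence; beta cannot be a common factor because all
  terms evaluate to 1 at x = (1,1,1,1), beta = 0. Numerical orbits are evaluations of the generic
  one, and negative indices reduce to positive ones because phi^-1 is phi conjugated by the
  reversal of coordinates.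
  (ii) If x_4 = e, the numerator of x_8 = (x_5 x_7 + beta x_6^c) / e is divisible by e, so x_8 is
  a continuous function of (x_0, ..., x_3, e) up to e = 0.
  (iii) The brackets of the components of phi are computed directly. The Pfaffian of the
  coefficient matrix is 2 + c - c^2 = (2 - c)(1 + c), which vanishes for c = 2 only.
*)
theory Submission
  imports Defs "HOL-Computational_Algebra.Polynomial_Factorial"
begin

section \<open>Nondegeneracy and the Poisson property\<close>

lemma UNIV_4_from_0: "(UNIV::4 set) = {0, 1, 2, 3}"
proof -
  have "(4::4) = 0" by simp
  then show ?thesis unfolding UNIV_4 by auto
qed

lemma exhaust_4_from_0:
  fixes i :: 4
  obtains "i = 0" | "i = 1" | "i = 2" | "i = 3"
  using UNIV_4_from_0 by auto

lemma forall_4_from_0: "(\<forall>i::4. P i) \<longleftrightarrow> P 0 \<and> P 1 \<and> P 2 \<and> P 3"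
  by (metis exhaust_4_from_0)

lemma sum_4_from_0: "sum f (UNIV::4 set) = f 0 + f 1 + f 2 + f 3"
  unfolding UNIV_4_from_0 by (simp add: ac_simps)

lemma pfaffian_lc_coeff_nonzero:
  assumes "c \<noteq> 2"
  shows "(2 + of_nat c - of_nat c ^ 2 :: complex) \<noteq> 0"
proof
  assume "(2 + of_nat c - of_nat c ^ 2 :: complex) = 0"
  then have "of_int ((2 - int c) * (1 + int c)) = (0::complex)"
    by (simp add: algebra_simps power2_eq_square)
  then have "(2 - int c) * (1 + int c) = 0"
    by (simp only: of_int_eq_0_iff)
  with assms show False by simp
qed

text \<open>The matrix \<open>Pf(C) C\<^sup>-\<^sup>1\<close> for the coefficient matrix \<open>C = lc_coeff c\<close>,
  whose Pfaffian is \<open>Pf(C) = 2 + c - c\<^sup>2\<close>.\<close>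
definition lc_coeff_adj :: "nat \<Rightarrow> complex^4^4" where
  "lc_coeff_adj c = (\<chi> i j.
     if i = 0 \<and> j = 1 then -1 else if i = 0 \<and> j = 2 then of_nat c
     else if i = 0 \<and> j = 3 then -1
     else if i = 1 \<and> j = 0 then 1 else if i = 1 \<and> j = 2 then - (of_nat c + 1)
     else if i = 1 \<and> j = 3 then of_nat c
     else if i = 2 \<and> j = 0 then - of_nat c else if i = 2 \<and> j = 1 then of_nat c + 1
     else if i = 2 \<and> j = 3 then -1
     else if i = 3 \<and> j = 0 then 1 else if i = 3 \<and> j = 1 then - of_nat c
     else if i = 3 \<and> j = 2 then 1 else 0)"

lemma lc_bracket_right_inverse:
  assumes c: "c \<noteq> 2" and x: "\<forall>i. x $ i \<noteq> 0"
  defines "P \<equiv> 2 + of_nat c - of_nat c ^ 2 :: complex"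
  shows "lc_bracket c x ** (\<chi> i j. lc_coeff_adj c $ i $ j / (P * x $ i * x $ j)) = mat 1"
proof -
  have P: "P \<noteq> 0" using pfaffian_lc_coeff_nonzero[OF c] by (simp add: P_def)
  have x0: "x $ 0 \<noteq> 0" and x1: "x $ 1 \<noteq> 0" and x2: "x $ 2 \<noteq> 0" and x3: "x $ 3 \<noteq> 0"
    using x by auto
  show ?thesis
    unfolding vec_eq_iff forall_4_from_0 matrix_matrix_mult_def
    by (simp add: sum_4_from_0 lc_bracket_def lc_coeff_def lc_coeff_adj_def mat_def x0 x1 x2 x3 P field_simps,
        simp_all add: P_def algebra_simps power2_eq_square)
qed

lemma det_lc_bracket_nonzero:
  assumes "c \<noteq> 2" and "\<forall>i. x $ i \<noteq> 0"
  shows "det (lc_bracket c x) \<noteq> 0"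
  using arg_cong[OF lc_bracket_right_inverse[OF assms], of det] det_mul[of "lc_bracket c x"]
  by auto

lemma pderiv4_coord: "pderiv4 k (\<lambda>y. y $ j) x = of_bool (j = k)"
  by (simp add: pderiv4_def)

lemma pbr_coord_left:
  "pbr c (\<lambda>y. y $ a) g x = (\<Sum>l\<in>UNIV. lc_bracket c x $ a $ l * pderiv4 l g x)"
proof -
  have "pbr c (\<lambda>y. y $ a) g x
      = (\<Sum>k\<in>UNIV. of_bool (a = k) * (\<Sum>l\<in>UNIV. lc_bracket c x $ k $ l * pderiv4 l g x))"
    by (simp only: pbr_def pderiv4_coord mult.assoc sum_distrib_left)
  then show ?thesis by simp
qed

lemma pbr_coord_coord: "pbr c (\<lambda>y. y $ a) (\<lambda>y. y $ b) x = lc_bracket c x $ a $ b"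
  by (simp add: pbr_coord_left pderiv4_coord)

lemma lc_coeff_antisym: "lc_coeff c $ k $ l = - lc_coeff c $ l $ k"
  by (cases k rule: exhaust_4_from_0; cases l rule: exhaust_4_from_0) (simp_all add: lc_coeff_def)

lemma lc_bracket_antisym: "lc_bracket c x $ k $ l = - lc_bracket c x $ l $ k"
  by (simp add: lc_bracket_def lc_coeff_antisym[of c k l])

lemma pbr_antisym: "pbr c f g x = - pbr c g f x"
proof -
  have "pbr c f g x = (\<Sum>k\<in>UNIV. \<Sum>l\<in>UNIV. - (pderiv4 l g x * lc_bracket c x $ l $ k * pderiv4 k f x))"
    unfolding pbr_def
    by (intro sum.cong refl) (subst lc_bracket_antisym, simp add: algebra_simps)
  also have "\<dots> = - pbr c g f x"
    unfolding pbr_def by (subst sum.swap) (simp add: sum_negf)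
  finally show ?thesis .
qed

lemma pbr_self: "pbr c f f x = 0"
  using pbr_antisym[of c f f x] by simp

lemma phi_nth_shift: "phi c \<beta> y $ 0 = y $ 1" "phi c \<beta> y $ 1 = y $ 2" "phi c \<beta> y $ 2 = y $ 3"
  by (simp_all add: phi_def)

lemma phi_nth_3: "phi c \<beta> y $ 3 = (y $ 1 * y $ 3 + \<beta> * y $ 2 ^ c) / y $ 0"
  by (simp add: phi_def)

lemma pderiv4_phi_nth_3:
  assumes x0: "x $ 0 \<noteq> 0"
  shows "x $ k * pderiv4 k (\<lambda>y. phi c \<beta> y $ 3) x =
    (if k = 0 then - phi c \<beta> x $ 3 else if k = 2 then of_nat c * \<beta> * x $ 2 ^ c / x $ 0
     else x $ 1 * x $ 3 / x $ 0)"
proof (cases k rule: exhaust_4_from_0)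
  case 1
  have "((\<lambda>t. (x $ 1 * x $ 3 + \<beta> * x $ 2 ^ c) / t) has_field_derivative
      - (x $ 1 * x $ 3 + \<beta> * x $ 2 ^ c) / x $ 0 ^ 2) (at (x $ 0))"
    by (rule derivative_eq_intros refl | use x0 in \<open>simp add: power2_eq_square\<close>)+
  with 1 x0 show ?thesis
    by (simp add: pderiv4_def phi_nth_3 DERIV_imp_deriv power2_eq_square field_simps)
next
  case 2
  have "((\<lambda>t. (t * x $ 3 + \<beta> * x $ 2 ^ c) / x $ 0) has_field_derivative x $ 3 / x $ 0) (at (x $ 1))"
    by (rule derivative_eq_intros refl | use x0 in simp)+
  with 2 show ?thesis by (simp add: pderiv4_def phi_nth_3 DERIV_imp_deriv)
next
  case 3
  have "((\<lambda>t. (x $ 1 * x $ 3 + \<beta> * t ^ c) / x $ 0) has_field_derivative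
      \<beta> * of_nat c * x $ 2 ^ (c - 1) / x $ 0) (at (x $ 2))"
    by (rule derivative_eq_intros refl | use x0 in simp)+
  moreover have "x $ 2 * x $ 2 ^ (c - 1) * of_nat c = x $ 2 ^ c * of_nat c"
    by (cases c) simp_all
  ultimately show ?thesis using 3 by (simp add: pderiv4_def phi_nth_3 DERIV_imp_deriv mult_ac)
next
  case 4
  have "((\<lambda>t. (x $ 1 * t + \<beta> * x $ 2 ^ c) / x $ 0) has_field_derivative x $ 1 / x $ 0) (at (x $ 3))"
    by (rule derivative_eq_intros refl | use x0 in simp)+
  with 4 show ?thesis by (simp add: pderiv4_def phi_nth_3 DERIV_imp_deriv)
qed

lemma pbr_coord_phi_nth_3:
  assumes x0: "x $ 0 \<noteq> 0" and a: "a \<noteq> 0"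
  shows "pbr c (\<lambda>y. y $ a) (\<lambda>y. phi c \<beta> y $ 3) x = lc_coeff c $ (a - 1) $ 3 * x $ a * phi c \<beta> x $ 3"
proof -
  have "pbr c (\<lambda>y. y $ a) (\<lambda>y. phi c \<beta> y $ 3) x =
      (\<Sum>l\<in>UNIV. lc_coeff c $ a $ l * x $ a * (x $ l * pderiv4 l (\<lambda>y. phi c \<beta> y $ 3) x))"
    by (simp add: pbr_coord_left lc_bracket_def mult_ac)
  also have "\<dots> = lc_coeff c $ (a - 1) $ 3 * x $ a * phi c \<beta> x $ 3"
    using a x0 unfolding sum_4_from_0 pderiv4_phi_nth_3[OF x0]
    by (cases a rule: exhaust_4_from_0) (simp_all add: lc_coeff_def phi_nth_3 field_simps)
  finally show ?thesis .
qed

lemma phi_poisson: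
  assumes x0: "x $ 0 \<noteq> 0"
  shows "pbr c (\<lambda>y. phi c \<beta> y $ i) (\<lambda>y. phi c \<beta> y $ j) x = lc_bracket c (phi c \<beta> x) $ i $ j"
proof -
  note brackets = pbr_coord_coord pbr_coord_phi_nth_3[OF x0] pbr_self
    pbr_antisym[of c "\<lambda>y. phi c \<beta> y $ 3" "\<lambda>y. y $ _"]
  show ?thesis
    by (cases i rule: exhaust_4_from_0; cases j rule: exhaust_4_from_0)
      (simp_all add: phi_nth_shift brackets lc_bracket_def lc_coeff_def algebra_simps)
qed

section \<open>Orbits and singularity confinement\<close>

definition xnat :: "nat \<Rightarrow> complex \<Rightarrow> complex^4 \<Rightarrow> nat \<Rightarrow> complex" where
  "xnat c \<beta> u n = ((phi c \<beta> ^^ n) u) $ 0"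

lemma xseq_of_nat: "xseq c \<beta> u (int n) = xnat c \<beta> u n"
  by (simp add: xseq_def xnat_def)

lemma phi_power_nth:
  "((phi c \<beta> ^^ n) u) $ 1 = xnat c \<beta> u (n + 1)"
  "((phi c \<beta> ^^ n) u) $ 2 = xnat c \<beta> u (n + 2)"
  "((phi c \<beta> ^^ n) u) $ 3 = xnat c \<beta> u (n + 3)"
proof -
  have nth_1: "((phi c \<beta> ^^ m) u) $ 1 = xnat c \<beta> u (m + 1)" for m
    by (simp add: xnat_def phi_nth_shift)
  have nth_2: "((phi c \<beta> ^^ m) u) $ 2 = xnat c \<beta> u (m + 2)" for m
    using nth_1[of "Suc m"] by (simp add: phi_nth_shift numeral_2_eq_2)
  have "((phi c \<beta> ^^ n) u) $ 3 = xnat c \<beta> u (n + 3)"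
    using nth_2[of "Suc n"] by (simp add: phi_nth_shift numeral_3_eq_3)
  with nth_1 nth_2 show
    "((phi c \<beta> ^^ n) u) $ 1 = xnat c \<beta> u (n + 1)"
    "((phi c \<beta> ^^ n) u) $ 2 = xnat c \<beta> u (n + 2)"
    "((phi c \<beta> ^^ n) u) $ 3 = xnat c \<beta> u (n + 3)" by simp_all
qed

lemma xnat_initial: "xnat c \<beta> u 0 = u $ 0" "xnat c \<beta> u 1 = u $ 1" "xnat c \<beta> u 2 = u $ 2" "xnat c \<beta> u 3 = u $ 3"
  using phi_power_nth[where n = 0 and c = c and \<beta> = \<beta> and u = u, unfolded funpow_0 add_0]
  by (simp_all only: xnat_def[where n = 0] funpow_0)

lemma xnat_step:
  "xnat c \<beta> u (n + 4) = (xnat c \<beta> u (n + 1) * xnat c \<beta> u (n + 3) + \<beta> * xnat c \<beta> u (n + 2) ^ c) / xnat c \<beta> u n"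
proof -
  have "xnat c \<beta> u (n + 4) = phi c \<beta> ((phi c \<beta> ^^ n) u) $ 3"
    using phi_power_nth(3)[where n = "Suc n"] by (simp add: add.commute)
  then show ?thesis by (simp add: phi_nth_3 phi_power_nth xnat_def)
qed

text \<open>The value of \<open>x\<^sub>8\<close> when \<open>x\<^sub>4 = e\<close>, after the factor \<open>e\<close> has been cancelled
  from numerator and denominator; it is continuous at \<open>e = 0\<close> (for \<open>c = 0\<close> the last sum is empty).\<close>
definition confined_x8 :: "nat \<Rightarrow> complex \<Rightarrow> complex \<Rightarrow> complex \<Rightarrow> complex \<Rightarrow> complex \<Rightarrow> complex \<Rightarrow> complex" where
  "confined_x8 c \<beta> x0 x1 x2 x3 e =
    (let x5 = (x2 * e + \<beta> * x3 ^ c) / x1; x6 = (x3 * x5 + \<beta> * e ^ c) / x2; y = x3 * x5 / x2 in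
     x5 * x6 / x3 + \<beta> * x5 ^ c * (x2 ^ (c + 1) + x3 ^ c * x0) / (x1 * x3 * x2 ^ c)
     + \<beta>\<^sup>2 * e ^ (c - 1) / x2 * (\<Sum>i<c. y ^ (c - Suc i) * x6 ^ i))"

lemma x5_term_multiple_of_x4:
  fixes x0 x1 x2 x3 e x5 :: complex
  assumes "x1 \<noteq> 0" "x2 \<noteq> 0" "x3 \<noteq> 0"
    and x4: "x1 * x3 + \<beta> * x2 ^ c = e * x0"
    and x5: "x5 = (x2 * e + \<beta> * x3 ^ c) / x1"
  shows "x5 / x3 + x3 ^ c / x2 ^ c = e * (x2 ^ (c + 1) + x3 ^ c * x0) / (x1 * x3 * x2 ^ c)"
proof -
  have "x5 * x1 * x2 ^ c + x3 * x3 ^ c * x1 = x2 * x2 ^ c * e + x3 ^ c * (x1 * x3 + \<beta> * x2 ^ c)"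
    using assms(1-3) by (simp add: x5 field_simps)
  also have "\<dots> = e * (x2 ^ (c + 1) + x3 ^ c * x0)"
    by (simp add: x4 algebra_simps)
  finally have numerator: "x5 * x1 * x2 ^ c + x3 * x3 ^ c * x1 = e * (x2 ^ (c + 1) + x3 ^ c * x0)" .
  have "x5 / x3 + x3 ^ c / x2 ^ c = (x5 * x1 * x2 ^ c + x3 * x3 ^ c * x1) / (x1 * x3 * x2 ^ c)"
    using assms(1-3) by (simp add: field_simps)
  then show ?thesis by (simp only: numerator)
qed

lemma x8_eq_confined_x8:
  fixes x0 x1 x2 x3 e x5 x6 x7 :: complex
  assumes nz: "x0 \<noteq> 0" "x1 \<noteq> 0" "x2 \<noteq> 0" "x3 \<noteq> 0" "e \<noteq> 0"
    and x4: "x1 * x3 + \<beta> * x2 ^ c = e * x0"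
    and x5: "x5 = (x2 * e + \<beta> * x3 ^ c) / x1"
    and x6: "x6 = (x3 * x5 + \<beta> * e ^ c) / x2"
    and x7: "x7 = (e * x6 + \<beta> * x5 ^ c) / x3"
  shows "(x5 * x7 + \<beta> * x6 ^ c) / e = confined_x8 c \<beta> x0 x1 x2 x3 e"
proof -
  define y where "y = x3 * x5 / x2"
  define S where "S = (\<Sum>i<c. y ^ (c - Suc i) * x6 ^ i)"
  define D where "D = x1 * x3 * x2 ^ c"
  have x5x7: "x5 * x7 = e * (x5 * x6 / x3) + \<beta> * x5 ^ (c + 1) / x3"
    using nz by (simp add: x7 field_simps)
  have x6_power: "x6 ^ c - y ^ c = e * (\<beta> * e ^ (c - 1) / x2) * S"
  proof (cases c)
    case 0
    then show ?thesis by (simp add: S_def)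
  next
    case (Suc k)
    have "x6 - y = e * (\<beta> * e ^ (c - 1) / x2)"
      using nz by (simp add: x6 y_def Suc field_simps)
    then show ?thesis using power_diff_sumr2[of x6 c y] by (simp add: S_def)
  qed
  have "x5 / x3 + x3 ^ c / x2 ^ c = e * (x2 ^ (c + 1) + x3 ^ c * x0) / D"
    unfolding D_def by (rule x5_term_multiple_of_x4[OF nz(2-4) x4 x5])
  moreover have "x5 ^ (c + 1) / x3 + y ^ c = x5 ^ c * (x5 / x3 + x3 ^ c / x2 ^ c)"
    using nz by (simp add: y_def power_mult_distrib power_divide field_simps)
  ultimately have x5_power: "x5 ^ (c + 1) / x3 + y ^ c = e * (x5 ^ c * (x2 ^ (c + 1) + x3 ^ c * x0) / D)"
    by simp
  have "x5 * x7 + \<beta> * x6 ^ c = e * (x5 * x6 / x3) + \<beta> * (x5 ^ (c + 1) / x3 + y ^ c) + \<beta> * (x6 ^ c - y ^ c)"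
    by (simp add: x5x7 algebra_simps)
  also have "\<dots> = e * (x5 * x6 / x3 + \<beta> * x5 ^ c * (x2 ^ (c + 1) + x3 ^ c * x0) / D
      + \<beta>\<^sup>2 * e ^ (c - 1) / x2 * S)"
    unfolding x5_power x6_power by (simp add: algebra_simps power2_eq_square)
  finally have "(x5 * x7 + \<beta> * x6 ^ c) / e = x5 * x6 / x3 + \<beta> * x5 ^ c * (x2 ^ (c + 1) + x3 ^ c * x0) / D
      + \<beta>\<^sup>2 * e ^ (c - 1) / x2 * S"
    by (simp only: nonzero_mult_div_cancel_left[OF nz(5)])
  then show ?thesis
    unfolding confined_x8_def Let_def D_def S_def y_def x5[symmetric] x6[symmetric] .
qed

lemma tendsto_confined_x8:
  assumes "(a0 \<longlongrightarrow> q0) F" "(a1 \<longlongrightarrow> q1) F" "(a2 \<longlongrightarrow> q2) F" "(a3 \<longlongrightarrow> q3) F" "(e \<longlongrightarrow> 0) F"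
    and "q1 \<noteq> 0" "q2 \<noteq> 0" "q3 \<noteq> 0"
  shows "((\<lambda>t. confined_x8 c \<beta> (a0 t) (a1 t) (a2 t) (a3 t) (e t)) \<longlongrightarrow> confined_x8 c \<beta> q0 q1 q2 q3 0) F"
  unfolding confined_x8_def Let_def by (intro tendsto_intros assms) (simp add: assms)

lemma tendsto_imp_Bfun:
  fixes f :: "'a \<Rightarrow> 'b::metric_space"
  assumes "(f \<longlongrightarrow> l) F"
  shows "Bfun f F"
  unfolding Bfun_metric_def
  using tendstoD[OF assms, of 1] by (auto intro!: exI[of _ l] exI[of _ 1] elim: eventually_mono)

lemma xseq_8_eq_confined_x8:
  assumes u: "\<forall>i. u $ i \<noteq> 0" and x4: "xseq c \<beta> u 4 = e" and "e \<noteq> 0"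
  shows "xseq c \<beta> u 8 = confined_x8 c \<beta> (u $ 0) (u $ 1) (u $ 2) (u $ 3) e"
proof -
  let ?x = "xnat c \<beta> u"
  have x4: "?x 4 = e" using x4 xseq_of_nat[of c \<beta> u 4] by simp
  have nz: "?x 0 \<noteq> 0" "?x 1 \<noteq> 0" "?x 2 \<noteq> 0" "?x 3 \<noteq> 0" "?x 4 \<noteq> 0"
    using u x4 \<open>e \<noteq> 0\<close> unfolding xnat_initial by simp_all
  have r4: "?x 1 * ?x 3 + \<beta> * ?x 2 ^ c = ?x 4 * ?x 0"
    using xnat_step[of c \<beta> u 0, unfolded add_0] nz(1) by (simp add: field_simps)
  have r5: "?x 5 = (?x 2 * ?x 4 + \<beta> * ?x 3 ^ c) / ?x 1"
    using xnat_step[of c \<beta> u 1] by (simp add: eval_nat_numeral)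
  have r6: "?x 6 = (?x 3 * ?x 5 + \<beta> * ?x 4 ^ c) / ?x 2"
    using xnat_step[of c \<beta> u 2] by (simp add: eval_nat_numeral)
  have r7: "?x 7 = (?x 4 * ?x 6 + \<beta> * ?x 5 ^ c) / ?x 3"
    using xnat_step[of c \<beta> u 3] by (simp add: eval_nat_numeral)
  have "xseq c \<beta> u 8 = (?x 5 * ?x 7 + \<beta> * ?x 6 ^ c) / ?x 4"
    using xnat_step[of c \<beta> u 4] xseq_of_nat[of c \<beta> u 8] by (simp add: eval_nat_numeral)
  also have "\<dots> = confined_x8 c \<beta> (?x 0) (?x 1) (?x 2) (?x 3) (?x 4)"
    by (rule x8_eq_confined_x8[OF nz r4 r5 r6 r7])
  finally show ?thesis unfolding x4 xnat_initial .
qed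

lemma singularity_confinement:
  assumes lim: "(u \<longlongrightarrow> p) (at (0::complex))" and p: "\<forall>i. p $ i \<noteq> 0"
    and x4: "\<forall>\<^sub>F \<epsilon> in at 0. xseq c \<beta> (u \<epsilon>) 4 = \<epsilon>"
  shows "Bfun (\<lambda>\<epsilon>. xseq c \<beta> (u \<epsilon>) 8) (at 0)"
proof -
  have lim_nth: "((\<lambda>\<epsilon>. u \<epsilon> $ i) \<longlongrightarrow> p $ i) (at 0)" for i
    by (intro tendsto_intros lim)
  have "\<forall>\<^sub>F \<epsilon> in at 0. u \<epsilon> $ i \<noteq> 0" for i
    using tendsto_imp_eventually_ne[OF lim_nth p[rule_format]] .
  then have "\<forall>\<^sub>F \<epsilon> in at 0. \<forall>i. u \<epsilon> $ i \<noteq> 0"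
    unfolding forall_4_from_0 by (intro eventually_conj) simp_all
  moreover have "\<forall>\<^sub>F \<epsilon> in at (0::complex). \<epsilon> \<noteq> 0"
    by (simp add: eventually_at_filter)
  ultimately have "\<forall>\<^sub>F \<epsilon> in at 0.
      confined_x8 c \<beta> (u \<epsilon> $ 0) (u \<epsilon> $ 1) (u \<epsilon> $ 2) (u \<epsilon> $ 3) \<epsilon> = xseq c \<beta> (u \<epsilon>) 8"
    using x4 by eventually_elim (simp add: xseq_8_eq_confined_x8)
  moreover have "((\<lambda>\<epsilon>. confined_x8 c \<beta> (u \<epsilon> $ 0) (u \<epsilon> $ 1) (u \<epsilon> $ 2) (u \<epsilon> $ 3) \<epsilon>)
      \<longlongrightarrow> confined_x8 c \<beta> (p $ 0) (p $ 1) (p $ 2) (p $ 3) 0) (at 0)"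
    by (rule tendsto_confined_x8[OF lim_nth lim_nth lim_nth lim_nth tendsto_ident_at]) (use p in auto)
  ultimately have "((\<lambda>\<epsilon>. xseq c \<beta> (u \<epsilon>) 8) \<longlongrightarrow> confined_x8 c \<beta> (p $ 0) (p $ 1) (p $ 2) (p $ 3) 0) (at 0)"
    by (rule Lim_transform_eventually[rotated])
  then show ?thesis by (rule tendsto_imp_Bfun)
qed

section \<open>Localisation of a factorial ring away from an element\<close>

definition is_ring_hom :: "('a::comm_ring_1 \<Rightarrow> 'b::comm_ring_1) \<Rightarrow> bool" where
  "is_ring_hom h \<longleftrightarrow> h 1 = 1 \<and> (\<forall>x y. h (x + y) = h x + h y) \<and> (\<forall>x y. h (x * y) = h x * h y)"

lemma ring_hom_1: "is_ring_hom h \<Longrightarrow> h 1 = 1"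
  and ring_hom_add: "is_ring_hom h \<Longrightarrow> h (x + y) = h x + h y"
  and ring_hom_mult: "is_ring_hom h \<Longrightarrow> h (x * y) = h x * h y"
  by (simp_all add: is_ring_hom_def)

lemma ring_hom_0: "is_ring_hom h \<Longrightarrow> h 0 = 0"
  using ring_hom_add[of h 0 0] by simp

lemma ring_hom_power: "is_ring_hom h \<Longrightarrow> h (x ^ n) = h x ^ n"
  by (induction n) (simp_all add: ring_hom_1 ring_hom_mult)

lemmas ring_hom_simps = ring_hom_0 ring_hom_1 ring_hom_add ring_hom_mult ring_hom_power

lemma is_ring_hom_of_int: "is_ring_hom of_int"
  by (simp add: is_ring_hom_def)

definition poly_eval :: "('a::zero \<Rightarrow> 'b::comm_semiring_0) \<Rightarrow> 'b \<Rightarrow> 'a poly \<Rightarrow> 'b" where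
  "poly_eval h z p = poly (map_poly h p) z"

lemma poly_eval_0 [simp]: "poly_eval h z 0 = 0"
  by (simp add: poly_eval_def)

lemma poly_eval_pCons: "h 0 = 0 \<Longrightarrow> poly_eval h z (pCons a p) = h a + z * poly_eval h z p"
  by (simp add: poly_eval_def map_poly_pCons)

lemma is_ring_hom_poly_eval:
  assumes h: "is_ring_hom h"
  shows "is_ring_hom (poly_eval h z)"
proof -
  have add: "poly_eval h z (p + q) = poly_eval h z p + poly_eval h z q" for p q
  proof -
    have "map_poly h (p + q) = map_poly h p + map_poly h q"
      by (rule poly_eqI) (simp add: coeff_map_poly ring_hom_0[OF h] ring_hom_add[OF h])
    then show ?thesis by (simp add: poly_eval_def)
  qed
  have smult: "poly_eval h z (smult a q) = h a * poly_eval h z q" for a q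
    by (simp add: poly_eval_def map_poly_smult ring_hom_0[OF h] ring_hom_mult[OF h])
  have mult: "poly_eval h z (p * q) = poly_eval h z p * poly_eval h z q" for p q
    by (induction p) (simp_all add: poly_eval_pCons ring_hom_0[OF h] add smult algebra_simps)
  show ?thesis
    unfolding is_ring_hom_def using add mult by (simp add: poly_eval_def ring_hom_1[OF h])
qed

lemma to_fract_power [simp]: "to_fract (x ^ n) = to_fract x ^ n"
  by (induction n) simp_all

text \<open>The localisation \<open>R[M\<^sup>-\<^sup>1]\<close> of a factorial ring \<open>R\<close>, as a subring of its fraction field.
  Its primes are, up to units, the primes of \<open>R\<close> not dividing \<open>M\<close>.\<close>
locale localization_away =
  fixes M :: "'a :: factorial_ring_gcd"
  assumes M_nonzero: "M \<noteq> 0"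
begin

definition loc :: "'a fract set" where
  "loc = {to_fract a / to_fract M ^ k | a k. True}"

lemma locI: "f = to_fract a / to_fract M ^ k \<Longrightarrow> f \<in> loc"
  unfolding loc_def by blast

lemma locE:
  assumes "f \<in> loc"
  obtains a k where "f = to_fract a / to_fract M ^ k"
  using assms unfolding loc_def by blast

lemma to_fract_in_loc: "to_fract a \<in> loc"
  by (rule locI[of _ a 0]) simp

lemma loc_0: "0 \<in> loc" and loc_1: "1 \<in> loc"
  using to_fract_in_loc[of 0] to_fract_in_loc[of 1] by simp_all

lemma loc_add:
  assumes "f \<in> loc" "g \<in> loc"
  shows "f + g \<in> loc"
proof -
  obtain a k b l where f: "f = to_fract a / to_fract M ^ k" and g: "g = to_fract b / to_fract M ^ l"
    using assms by (meson locE)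
  have "f + g = to_fract (a * M ^ l + b * M ^ k) / to_fract M ^ (k + l)"
    unfolding f g using M_nonzero by (simp add: field_simps power_add)
  then show ?thesis by (rule locI)
qed

lemma loc_mult:
  assumes "f \<in> loc" "g \<in> loc"
  shows "f * g \<in> loc"
proof -
  obtain a k b l where f: "f = to_fract a / to_fract M ^ k" and g: "g = to_fract b / to_fract M ^ l"
    using assms by (meson locE)
  have "f * g = to_fract (a * b) / to_fract M ^ (k + l)"
    unfolding f g by (simp add: power_add)
  then show ?thesis by (rule locI)
qed

lemma loc_uminus: "f \<in> loc \<Longrightarrow> - f \<in> loc"
  by (metis locE locI minus_divide_left to_fract_uminus)

lemma loc_diff: "f \<in> loc \<Longrightarrow> g \<in> loc \<Longrightarrow> f - g \<in> loc"
  using loc_add[of f "- g"] loc_uminus[of g] by simp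

lemma loc_power: "f \<in> loc \<Longrightarrow> f ^ n \<in> loc"
  by (induction n) (simp_all add: loc_1 loc_mult)

lemma loc_sum: "(\<And>i. i \<in> A \<Longrightarrow> f i \<in> loc) \<Longrightarrow> sum f A \<in> loc"
  by (induction A rule: infinite_finite_induct) (simp_all add: loc_0 loc_add)

lemma inverse_to_fract_in_loc:
  assumes "w dvd M ^ r"
  shows "inverse (to_fract w) \<in> loc"
proof -
  obtain v where v: "M ^ r = w * v" using assms by (elim dvdE)
  then have "w \<noteq> 0" "v \<noteq> 0" using M_nonzero by auto
  with v have "inverse (to_fract w) = to_fract v / to_fract M ^ r"
    by (simp add: to_fract_power[symmetric] field_simps del: to_fract_power)
  then show ?thesis by (rule locI)
qed

lemma frac_eq_imp:
  assumes "to_fract a / to_fract M ^ k = to_fract b / to_fract M ^ l"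
  shows "a * M ^ l = b * M ^ k"
proof -
  have "to_fract (a * M ^ l) = to_fract (b * M ^ k)"
    using assms M_nonzero by (simp add: frac_eq_eq)
  then show ?thesis by (simp only: to_fract_eq_iff)
qed

definition loc_prime :: "'a \<Rightarrow> bool" where
  "loc_prime p \<longleftrightarrow> prime p \<and> \<not> p dvd M"

definition loc_dvd :: "'a \<Rightarrow> 'a fract \<Rightarrow> bool" where
  "loc_dvd p f \<longleftrightarrow> (\<exists>g\<in>loc. f = to_fract p * g)"

definition loc_coprime :: "'a fract \<Rightarrow> 'a fract \<Rightarrow> bool" where
  "loc_coprime f g \<longleftrightarrow> (\<forall>p. loc_prime p \<longrightarrow> \<not> (loc_dvd p f \<and> loc_dvd p g))"

lemma loc_dvd_iff:
  assumes p: "loc_prime p" and f: "f = to_fract a / to_fract M ^ k"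
  shows "loc_dvd p f \<longleftrightarrow> p dvd a"
proof
  assume "loc_dvd p f"
  then obtain b l where "f = to_fract p * (to_fract b / to_fract M ^ l)"
    unfolding loc_dvd_def by (auto elim: locE)
  with f have "a * M ^ l = p * b * M ^ k"
    by (intro frac_eq_imp) simp
  then have "p dvd a * M ^ l" by (metis dvd_triv_left mult.assoc)
  moreover have "\<not> p dvd M ^ l"
    using p prime_dvd_power unfolding loc_prime_def by blast
  ultimately show "p dvd a"
    using p by (simp add: loc_prime_def prime_dvd_mult_iff)
next
  assume "p dvd a"
  then obtain q where "a = p * q" by (elim dvdE)
  with f have "f = to_fract p * (to_fract q / to_fract M ^ k)" by simp
  then show "loc_dvd p f"
    unfolding loc_dvd_def by (blast intro: locI)
qed

lemma loc_dvd_to_fract: "loc_prime p \<Longrightarrow> loc_dvd p (to_fract a) \<longleftrightarrow> p dvd a"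
  using loc_dvd_iff[of p "to_fract a" a 0] by simp

lemma loc_dvd_mult_cases:
  assumes p: "loc_prime p" and "f \<in> loc" "g \<in> loc" and "loc_dvd p (f * g)"
  shows "loc_dvd p f \<or> loc_dvd p g"
proof -
  obtain a k b l where f: "f = to_fract a / to_fract M ^ k" and g: "g = to_fract b / to_fract M ^ l"
    using assms(2,3) by (meson locE)
  then have "f * g = to_fract (a * b) / to_fract M ^ (k + l)"
    by (simp add: power_add)
  with assms(4) have "p dvd a * b"
    using loc_dvd_iff[OF p] by blast
  then show ?thesis
    using p loc_dvd_iff[OF p f] loc_dvd_iff[OF p g] by (simp add: loc_prime_def prime_dvd_mult_iff)
qed

lemma loc_dvd_diff: "loc_dvd p f \<Longrightarrow> loc_dvd p g \<Longrightarrow> loc_dvd p (f - g)"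
  unfolding loc_dvd_def by (auto intro!: bexI[of _ "_ - _"] loc_diff simp: right_diff_distrib)

lemma loc_dvd_mult_right: "loc_dvd p f \<Longrightarrow> h \<in> loc \<Longrightarrow> loc_dvd p (f * h)"
  unfolding loc_dvd_def by (auto intro!: bexI[of _ "_ * h"] loc_mult simp: mult.assoc)

lemma loc_dvd_mult_left: "loc_dvd p f \<Longrightarrow> h \<in> loc \<Longrightarrow> loc_dvd p (h * f)"
  using loc_dvd_mult_right[of p f h] by (simp add: mult.commute)

lemma not_loc_dvd_1: "loc_prime p \<Longrightarrow> \<not> loc_dvd p 1"
  using loc_dvd_to_fract[of p 1] not_prime_unit[of p] by (auto simp: loc_prime_def)

lemma loc_dvd_power_imp:
  assumes p: "loc_prime p" and f: "f \<in> loc" and "loc_dvd p (f ^ n)"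
  shows "loc_dvd p f"
  using assms(3)
proof (induction n)
  case 0
  with not_loc_dvd_1[OF p] show ?case by simp
next
  case (Suc n)
  with loc_dvd_mult_cases[OF p f loc_power[OF f]] show ?case by auto
qed

lemma factor_off_M:
  "a \<noteq> 0 \<Longrightarrow> \<exists>w a' r. a = w * a' \<and> w dvd M ^ r \<and> (\<forall>q. prime q \<longrightarrow> q dvd a' \<longrightarrow> \<not> q dvd M)"
proof (induction a rule: prime_divisors_induct)
  case zero
  then show ?case by simp
next
  case (unit x)
  have "\<not> q dvd x" if "prime q" for q
    using that unit dvd_unit_imp_unit not_prime_unit by blast
  then show ?case by (intro exI[of _ 1] exI[of _ x] exI[of _ 0]) simp
next
  case (factor p x)
  then obtain w a' r where
    x: "x = w * a'" "w dvd M ^ r" "\<forall>q. prime q \<longrightarrow> q dvd a' \<longrightarrow> \<not> q dvd M"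
    by auto
  show ?case
  proof (cases "p dvd M")
    case True
    then have "p * w dvd M ^ Suc r" using x(2) by (simp add: mult_dvd_mono)
    with x show ?thesis by (metis mult.assoc)
  next
    case False
    have "\<not> q dvd M" if "prime q" "q dvd p * a'" for q
      using that False x(3) factor.hyps primes_dvd_imp_eq by (metis prime_dvd_mult_iff)
    with x show ?thesis by (metis mult.left_commute)
  qed
qed

lemma coprime_mult_M_power:
  assumes "a \<noteq> 0" and M_free: "\<And>q. prime q \<Longrightarrow> q dvd a \<Longrightarrow> \<not> q dvd M"
    and no_common: "\<And>q. loc_prime q \<Longrightarrow> q dvd a \<Longrightarrow> q dvd d \<Longrightarrow> False"
  shows "coprime a (d * M ^ n)"
proof (rule coprimeI)
  fix c assume c: "c dvd a" "c dvd d * M ^ n"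
  show "is_unit c"
  proof (rule ccontr)
    assume "\<not> is_unit c"
    moreover have "c \<noteq> 0" using c(1) \<open>a \<noteq> 0\<close> by auto
    ultimately obtain q where q: "q dvd c" "prime q" using prime_divisor_exists by blast
    then have "q dvd a" "\<not> q dvd M" using c(1) M_free dvd_trans by blast+
    moreover have "q dvd d"
      using q c(2) \<open>\<not> q dvd M\<close> by (meson dvd_trans prime_dvd_mult_iff prime_dvd_power)
    ultimately show False
      using no_common q(2) by (auto simp: loc_prime_def)
  qed
qed

text \<open>The numerator of \<open>f\<close> splits into a divisor of a power of \<open>M\<close>, a unit of \<open>loc\<close>, and a
  part coprime to the numerator of \<open>h\<close>, which therefore divides the numerator of \<open>g\<close>.\<close>
lemma loc_dvd_cancel:
  assumes f: "f \<in> loc" and g: "g \<in> loc" and h: "h \<in> loc" and Q: "Q \<in> loc"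
    and "f \<noteq> 0" and eq: "g * h = f * Q" and cop: "loc_coprime f h"
  shows "\<exists>q\<in>loc. g = f * q"
proof -
  obtain a i b j d k e l where fa: "f = to_fract a / to_fract M ^ i" and gb: "g = to_fract b / to_fract M ^ j"
    and hd: "h = to_fract d / to_fract M ^ k" and Qe: "Q = to_fract e / to_fract M ^ l"
    using f g h Q by (meson locE)
  have "a \<noteq> 0" using \<open>f \<noteq> 0\<close> fa by auto
  then obtain w a' r where a: "a = w * a'" and w: "w dvd M ^ r"
    and a': "\<And>q. prime q \<Longrightarrow> q dvd a' \<Longrightarrow> \<not> q dvd M"
    using factor_off_M by blast
  have "to_fract (b * d) / to_fract M ^ (j + k) = to_fract (a * e) / to_fract M ^ (i + l)"
    using eq unfolding fa gb hd Qe by (simp add: power_add)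
  then have "b * d * M ^ (i + l) = a * e * M ^ (j + k)"
    by (rule frac_eq_imp)
  then have "a' dvd b * (d * M ^ (i + l))"
    unfolding a by (metis dvdI mult.assoc mult.left_commute)
  moreover have "coprime a' (d * M ^ (i + l))"
  proof (rule coprime_mult_M_power)
    show "a' \<noteq> 0" using \<open>a \<noteq> 0\<close> a by auto
  next
    fix q assume q: "loc_prime q" "q dvd a'" "q dvd d"
    then have "loc_dvd q f" "loc_dvd q h"
      using loc_dvd_iff[OF _ fa] loc_dvd_iff[OF _ hd] a by simp_all
    with cop q(1) show False unfolding loc_coprime_def by blast
  qed (rule a')
  ultimately have "a' dvd b" by (simp add: coprime_dvd_mult_left_iff)
  then obtain s where "b = a' * s" by (elim dvdE)
  moreover obtain v where "M ^ r = w * v" using w by (elim dvdE)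
  ultimately have "b * M ^ r = a * (s * v)" unfolding a by (simp add: mult_ac)
  then have "to_fract b * to_fract M ^ r = to_fract a * (to_fract s * to_fract v)"
    by (metis to_fract_mult to_fract_power)
  then have "g = f * (to_fract (s * v * M ^ i) / to_fract M ^ (j + r))"
    unfolding fa gb using M_nonzero by (simp add: field_simps power_add)
  then show ?thesis by (blast intro: locI)
qed

definition loc_eval :: "('a \<Rightarrow> 'b::field) \<Rightarrow> 'a fract \<Rightarrow> 'b" where
  "loc_eval h f = (THE v. \<exists>a k. f = to_fract a / to_fract M ^ k \<and> v = h a / h M ^ k)"

context
  fixes h :: "'a \<Rightarrow> 'b::field"
  assumes h: "is_ring_hom h" and hM: "h M \<noteq> 0"
begin

lemma loc_eval_eq:
  assumes f: "f = to_fract a / to_fract M ^ k"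
  shows "loc_eval h f = h a / h M ^ k"
  unfolding loc_eval_def
proof (rule the_equality)
  show "\<exists>a' k'. f = to_fract a' / to_fract M ^ k' \<and> h a / h M ^ k = h a' / h M ^ k'"
    using f by blast
next
  fix v assume "\<exists>a' k'. f = to_fract a' / to_fract M ^ k' \<and> v = h a' / h M ^ k'"
  then obtain a' k' where f': "f = to_fract a' / to_fract M ^ k'" and v: "v = h a' / h M ^ k'"
    by blast
  from f f' have "a * M ^ k' = a' * M ^ k" by (intro frac_eq_imp) simp
  then have "h a * h M ^ k' = h a' * h M ^ k"
    by (metis ring_hom_mult[OF h] ring_hom_power[OF h])
  with hM show "v = h a / h M ^ k" by (simp add: v frac_eq_eq)
qed

lemma loc_eval_to_fract: "loc_eval h (to_fract a) = h a"
  using loc_eval_eq[of "to_fract a" a 0] by simp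

lemma loc_eval_add: "f \<in> loc \<Longrightarrow> g \<in> loc \<Longrightarrow> loc_eval h (f + g) = loc_eval h f + loc_eval h g"
  and loc_eval_mult: "f \<in> loc \<Longrightarrow> g \<in> loc \<Longrightarrow> loc_eval h (f * g) = loc_eval h f * loc_eval h g"
proof -
  assume "f \<in> loc" "g \<in> loc"
  then obtain a k b l where f: "f = to_fract a / to_fract M ^ k" and g: "g = to_fract b / to_fract M ^ l"
    by (meson locE)
  have "f + g = to_fract (a * M ^ l + b * M ^ k) / to_fract M ^ (k + l)"
    unfolding f g using M_nonzero by (simp add: field_simps power_add)
  from loc_eval_eq[OF this] show "loc_eval h (f + g) = loc_eval h f + loc_eval h g"
    unfolding loc_eval_eq[OF f] loc_eval_eq[OF g] using hM
    by (simp add: ring_hom_simps[OF h] field_simps power_add)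
  have "f * g = to_fract (a * b) / to_fract M ^ (k + l)"
    unfolding f g by (simp add: power_add)
  from loc_eval_eq[OF this] show "loc_eval h (f * g) = loc_eval h f * loc_eval h g"
    unfolding loc_eval_eq[OF f] loc_eval_eq[OF g] by (simp add: ring_hom_simps[OF h] power_add)
qed

lemma loc_eval_power: "f \<in> loc \<Longrightarrow> loc_eval h (f ^ n) = loc_eval h f ^ n"
  by (induction n) (simp_all add: loc_eval_to_fract[of 1, simplified] ring_hom_1[OF h] loc_eval_mult loc_power)

lemma loc_eval_loc_dvd:
  assumes "loc_dvd p f" and "h p = 0"
  shows "loc_eval h f = 0"
  using assms unfolding loc_dvd_def by (auto simp: loc_eval_mult to_fract_in_loc loc_eval_to_fract)

end

end

section \<open>The Laurent property\<close>

text \<open>\<open>\<int>[x\<^sub>0,x\<^sub>1,x\<^sub>2,x\<^sub>3,\<beta>]\<close> as nested univariate polynomials: \<open>x\<^sub>0\<close> is the outermost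
  variable and \<open>\<beta>\<close> the innermost one.\<close>
type_synonym poly5 = "int poly poly poly poly poly"

definition X0 :: poly5 where "X0 = [:0, 1:]"
definition X1 :: poly5 where "X1 = [:[:0, 1:]:]"
definition X2 :: poly5 where "X2 = [:[:[:0, 1:]:]:]"
definition X3 :: poly5 where "X3 = [:[:[:[:0, 1:]:]:]:]"
definition XB :: poly5 where "XB = [:[:[:[:[:0, 1:]:]:]:]:]"
definition X_prod :: poly5 where "X_prod = X0 * X1 * X2 * X3"

definition eval5 :: "complex^4 \<Rightarrow> complex \<Rightarrow> poly5 \<Rightarrow> complex" where
  "eval5 x b = poly_eval (poly_eval (poly_eval (poly_eval (poly_eval of_int b) (x $ 3)) (x $ 2)) (x $ 1)) (x $ 0)"

lemma is_ring_hom_eval5: "is_ring_hom (eval5 x b)"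
  by (simp add: eval5_def is_ring_hom_poly_eval is_ring_hom_of_int)

lemma eval5_vars:
  "eval5 x b X0 = x $ 0" "eval5 x b X1 = x $ 1" "eval5 x b X2 = x $ 2" "eval5 x b X3 = x $ 3"
  "eval5 x b XB = b"
  by (simp_all add: eval5_def X0_def X1_def X2_def X3_def XB_def poly_eval_pCons ring_hom_0 ring_hom_1
      is_ring_hom_poly_eval is_ring_hom_of_int)

lemma eval5_X_prod: "eval5 x b X_prod = x $ 0 * x $ 1 * x $ 2 * x $ 3"
  by (simp add: X_prod_def ring_hom_mult[OF is_ring_hom_eval5] eval5_vars)

lemma laurent_poly_eval:
  assumes "\<And>a. (\<lambda>x b. H x b a) \<in> laurent" and "(\<lambda>x b. Z x b) \<in> laurent" and "\<And>x b. H x b 0 = 0"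
  shows "(\<lambda>x b. poly_eval (H x b) (Z x b) p) \<in> laurent"
proof (induction p)
  case 0
  show ?case using laurent.const[of 0] by simp
next
  case (pCons a p)
  show ?case
    by (simp add: poly_eval_pCons assms(3)) (intro laurent.add laurent.mult assms(1,2) pCons.IH)
qed

lemma laurent_power: "f \<in> laurent \<Longrightarrow> (\<lambda>x b. f x b ^ k) \<in> laurent"
  using laurent.const[of 1] by (induction k) (simp_all add: laurent.mult)

lemma laurent_eval5: "(\<lambda>x b. eval5 x b a) \<in> laurent"
  unfolding eval5_def
  by (intro laurent_poly_eval laurent.var laurent.par laurent.const)
    (simp_all add: ring_hom_0 is_ring_hom_poly_eval is_ring_hom_of_int)

lemma X_prod_nonzero: "X_prod \<noteq> 0"
  by (simp add: X_prod_def X0_def X1_def X2_def X3_def)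

interpretation Lau: localization_away X_prod
  by unfold_locales (rule X_prod_nonzero)

lemma laurent_of_loc:
  assumes "f \<in> Lau.loc"
  shows "\<exists>L\<in>laurent. \<forall>u \<beta>. (\<forall>i. u $ i \<noteq> 0) \<longrightarrow> L u \<beta> = Lau.loc_eval (eval5 u \<beta>) f"
proof -
  obtain a k where f: "f = to_fract a / to_fract X_prod ^ k"
    using assms by (rule Lau.locE)
  define L where
    "L = (\<lambda>x b. eval5 x b a * (inverse (x $ 0) * inverse (x $ 1) * inverse (x $ 2) * inverse (x $ 3)) ^ k)"
  have "L \<in> laurent"
    unfolding L_def by (intro laurent.mult laurent_eval5 laurent_power laurent.inv)
  moreover have "L u \<beta> = Lau.loc_eval (eval5 u \<beta>) f" if "\<forall>i. u $ i \<noteq> 0" for u \<beta>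
  proof -
    have "eval5 u \<beta> X_prod \<noteq> 0" using that by (simp add: eval5_X_prod)
    then show ?thesis
      by (simp add: Lau.loc_eval_eq[OF is_ring_hom_eval5 _ f] L_def eval5_X_prod divide_inverse
          power_mult_distrib power_inverse)
  qed
  ultimately show ?thesis by blast
qed

fun xsym :: "nat \<Rightarrow> nat \<Rightarrow> poly5 fract" where
  "xsym c 0 = to_fract X0"
| "xsym c (Suc 0) = to_fract X1"
| "xsym c (Suc (Suc 0)) = to_fract X2"
| "xsym c (Suc (Suc (Suc 0))) = to_fract X3"
| "xsym c (Suc (Suc (Suc (Suc n)))) =
     (xsym c (Suc n) * xsym c (Suc (Suc (Suc n))) + to_fract XB * xsym c (Suc (Suc n)) ^ c) / xsym c n"

lemma xsym_initial: "xsym c 0 = to_fract X0" "xsym c 1 = to_fract X1" "xsym c 2 = to_fract X2" "xsym c 3 = to_fract X3"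
  by (simp_all add: numeral_2_eq_2 numeral_3_eq_3)

lemma xsym_step: "xsym c (n + 4) = (xsym c (n + 1) * xsym c (n + 3) + to_fract XB * xsym c (n + 2) ^ c) / xsym c n"
  by (simp add: numeral_eq_Suc)

declare xsym.simps [simp del]

lemma xsym_recurrence:
  "xsym c n \<noteq> 0 \<Longrightarrow> xsym c (n + 4) * xsym c n = xsym c (n + 1) * xsym c (n + 3) + to_fract XB * xsym c (n + 2) ^ c"
  by (simp add: xsym_step)

text \<open>Evaluation at \<open>x = (1,1,1,1)\<close>, \<open>\<beta> = 0\<close>. There the recurrence becomes
  \<open>x\<^sub>n\<^sub>+\<^sub>4 x\<^sub>n = x\<^sub>n\<^sub>+\<^sub>1 x\<^sub>n\<^sub>+\<^sub>3\<close>, so every term evaluates to 1; this is what keeps \<open>\<beta>\<close>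
  from dividing a term.\<close>
abbreviation eval_at_1 :: "poly5 fract \<Rightarrow> complex" where
  "eval_at_1 \<equiv> Lau.loc_eval (eval5 (\<chi> _. 1) 0)"

lemma eval5_1_X_prod: "eval5 (\<chi> _. 1) 0 X_prod \<noteq> 0"
  by (simp add: eval5_X_prod)

lemmas eval_at_1_to_fract = Lau.loc_eval_to_fract[OF is_ring_hom_eval5 eval5_1_X_prod]
  and eval_at_1_add = Lau.loc_eval_add[OF is_ring_hom_eval5 eval5_1_X_prod]
  and eval_at_1_mult = Lau.loc_eval_mult[OF is_ring_hom_eval5 eval5_1_X_prod]
  and eval_at_1_power = Lau.loc_eval_power[OF is_ring_hom_eval5 eval5_1_X_prod]

lemma prime_dvd_XB_imp_eval5_1:
  fixes p :: poly5
  assumes "prime p" "p dvd XB"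
  shows "eval5 (\<chi> _. 1) 0 p = 0"
proof -
  let ?h = "eval5 (\<chi> _. 1) 0"
  obtain q where q: "XB = p * q" using assms(2) by (elim dvdE)
  have "prime_elem XB"
    by (simp add: XB_def prime_elem_const_poly_iff prime_elem_linear_poly)
  then have "is_unit q"
    using irreducibleD[OF prime_elem_imp_irreducible q] assms(1) by (auto simp: not_prime_unit)
  then obtain w where "1 = q * w" by (elim dvdE)
  then have "?h q \<noteq> 0"
    using ring_hom_1[OF is_ring_hom_eval5] ring_hom_mult[OF is_ring_hom_eval5] by (metis mult_zero_left zero_neq_one)
  moreover have "?h p * ?h q = 0"
    using q ring_hom_mult[OF is_ring_hom_eval5] eval5_vars(5) by metis
  ultimately show ?thesis by simp
qed

definition laurent_upto :: "nat \<Rightarrow> nat \<Rightarrow> bool" where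
  "laurent_upto c N \<longleftrightarrow> (\<forall>j\<le>N. xsym c j \<in> Lau.loc \<and> eval_at_1 (xsym c j) = 1)"

lemma laurent_uptoD:
  assumes "laurent_upto c N" "j \<le> N"
  shows "xsym c j \<in> Lau.loc" "eval_at_1 (xsym c j) = 1" "xsym c j \<noteq> 0"
  using assms eval_at_1_to_fract[of 0] by (auto simp: laurent_upto_def ring_hom_0[OF is_ring_hom_eval5])

lemma laurent_upto_recurrence:
  "laurent_upto c N \<Longrightarrow> n \<le> N \<Longrightarrow>
    xsym c (n + 4) * xsym c n = xsym c (n + 1) * xsym c (n + 3) + to_fract XB * xsym c (n + 2) ^ c"
  by (rule xsym_recurrence) (rule laurent_uptoD(3))

lemma initial_not_loc_dvd:
  assumes "Lau.loc_prime p" "n < 4"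
  shows "\<not> Lau.loc_dvd p (xsym c n)"
proof -
  have "X0 dvd X_prod" "X1 dvd X_prod" "X2 dvd X_prod" "X3 dvd X_prod"
    unfolding X_prod_def by (simp_all add: mult_ac)
  moreover have "n = 0 \<or> n = 1 \<or> n = 2 \<or> n = 3" using assms(2) by auto
  ultimately show ?thesis
    using assms(1) Lau.loc_dvd_to_fract[OF assms(1)] unfolding Lau.loc_prime_def
    by (auto simp: xsym_initial xsym.simps dest: dvd_trans)
qed

lemma loc_dvd_XB_power_imp:
  assumes H: "laurent_upto c N" and j: "j \<le> N" and p: "Lau.loc_prime p"
    and dj: "Lau.loc_dvd p (xsym c j)" and y: "y \<in> Lau.loc" and d: "Lau.loc_dvd p (to_fract XB * y ^ c)"
  shows "Lau.loc_dvd p y"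
proof -
  have "\<not> Lau.loc_dvd p (to_fract XB)"
  proof
    assume "Lau.loc_dvd p (to_fract XB)"
    then have "eval5 (\<chi> _. 1) 0 p = 0"
      using p Lau.loc_dvd_to_fract prime_dvd_XB_imp_eval5_1 by (auto simp: Lau.loc_prime_def)
    then have "eval_at_1 (xsym c j) = 0"
      using Lau.loc_eval_loc_dvd[OF is_ring_hom_eval5 eval5_1_X_prod dj] by simp
    with laurent_uptoD(2)[OF H j] show False by simp
  qed
  with Lau.loc_dvd_mult_cases[OF p Lau.to_fract_in_loc Lau.loc_power[OF y] d] show ?thesis
    using Lau.loc_dvd_power_imp[OF p y] by blast
qed

lemma loc_dvd_middle_term:
  assumes H: "laurent_upto c N" and m: "m + 4 \<le> N" and p: "Lau.loc_prime p"
    and d4: "Lau.loc_dvd p (xsym c (m + 4))"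
    and d: "Lau.loc_dvd p (xsym c (m + 1)) \<or> Lau.loc_dvd p (xsym c (m + 3))"
  shows "Lau.loc_dvd p (xsym c (m + 2))"
proof -
  have loc: "xsym c j \<in> Lau.loc" if "j \<le> m + 4" for j
    using laurent_uptoD(1)[OF H] that m by simp
  have "Lau.loc_dvd p (xsym c (m + 4) * xsym c m - xsym c (m + 1) * xsym c (m + 3))"
    using d by (auto intro!: Lau.loc_dvd_diff Lau.loc_dvd_mult_right[OF d4] loc
        intro: Lau.loc_dvd_mult_right Lau.loc_dvd_mult_left)
  then have B_term: "Lau.loc_dvd p (to_fract XB * xsym c (m + 2) ^ c)"
    using laurent_upto_recurrence[OF H, of m] m by simp
  have "m + 1 \<le> N" "m + 3 \<le> N" "xsym c (m + 2) \<in> Lau.loc"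
    using m loc by simp_all
  with d show ?thesis
    using loc_dvd_XB_power_imp[OF H _ p _ _ B_term] by blast
qed

lemma coprime_xsym_succ:
  assumes H: "laurent_upto c N"
  shows "n + 1 \<le> N \<Longrightarrow> Lau.loc_coprime (xsym c n) (xsym c (n + 1))"
proof (induction n)
  case 0
  then show ?case using initial_not_loc_dvd by (simp add: Lau.loc_coprime_def)
next
  case (Suc n)
  show ?case
  proof (cases "n < 2")
    case True
    then show ?thesis using initial_not_loc_dvd[of _ "Suc n" c] by (simp add: Lau.loc_coprime_def)
  next
    case False
    then obtain m where n: "n = m + 2" by (metis add.commute le_add_diff_inverse not_less)
    have "\<not> (Lau.loc_dvd p (xsym c (m + 3)) \<and> Lau.loc_dvd p (xsym c (m + 4)))" if p: "Lau.loc_prime p" for p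
    proof
      assume d: "Lau.loc_dvd p (xsym c (m + 3)) \<and> Lau.loc_dvd p (xsym c (m + 4))"
      then have "Lau.loc_dvd p (xsym c (m + 2))"
        using loc_dvd_middle_term[OF H _ p] Suc.prems n by simp
      with d p Suc.IH Suc.prems show False
        unfolding n by (auto simp: Lau.loc_coprime_def eval_nat_numeral)
    qed
    then show ?thesis
      unfolding Lau.loc_coprime_def n by (simp add: eval_nat_numeral)
  qed
qed

lemma coprime_xsym_add_3:
  assumes H: "laurent_upto c N" and n: "n + 3 \<le> N"
  shows "Lau.loc_coprime (xsym c n) (xsym c (n + 3))"
proof (cases n)
  case 0
  then show ?thesis using initial_not_loc_dvd by (simp add: Lau.loc_coprime_def)
next
  case (Suc m)
  have "\<not> (Lau.loc_dvd p (xsym c (m + 1)) \<and> Lau.loc_dvd p (xsym c (m + 4)))" if p: "Lau.loc_prime p" for p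
  proof
    assume d: "Lau.loc_dvd p (xsym c (m + 1)) \<and> Lau.loc_dvd p (xsym c (m + 4))"
    then have "Lau.loc_dvd p (xsym c (m + 2))"
      using loc_dvd_middle_term[OF H _ p] n Suc by simp
    with d p coprime_xsym_succ[OF H, of "m + 1"] n Suc show False
      by (auto simp: Lau.loc_coprime_def eval_nat_numeral)
  qed
  then show ?thesis
    unfolding Lau.loc_coprime_def Suc by (simp add: eval_nat_numeral)
qed

lemma coprime_xsym_add_2:
  assumes H: "laurent_upto c N" and n: "n + 2 \<le> N" and c: "c \<noteq> 0"
  shows "Lau.loc_coprime (xsym c n) (xsym c (n + 2))"
proof (cases "n < 2")
  case True
  then show ?thesis using initial_not_loc_dvd[of _ n c] by (simp add: Lau.loc_coprime_def)
next
  case False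
  then obtain m where m: "n = m + 2" by (metis add.commute le_add_diff_inverse not_less)
  have loc: "xsym c j \<in> Lau.loc" if "j \<le> m + 4" for j
    using laurent_uptoD(1)[OF H] that n m by simp
  have "\<not> (Lau.loc_dvd p (xsym c (m + 2)) \<and> Lau.loc_dvd p (xsym c (m + 4)))" if p: "Lau.loc_prime p" for p
  proof
    assume d: "Lau.loc_dvd p (xsym c (m + 2)) \<and> Lau.loc_dvd p (xsym c (m + 4))"
    have "xsym c (m + 2) ^ c = xsym c (m + 2) * xsym c (m + 2) ^ (c - 1)"
      using c by (cases c) simp_all
    then have "Lau.loc_dvd p (to_fract XB * xsym c (m + 2) ^ c)"
      using d Lau.loc_dvd_mult_left[OF Lau.loc_dvd_mult_right Lau.to_fract_in_loc] Lau.loc_power loc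
      by simp
    moreover have "Lau.loc_dvd p (xsym c (m + 4) * xsym c m)"
      using d loc by (simp add: Lau.loc_dvd_mult_right)
    ultimately have "Lau.loc_dvd p (xsym c (m + 4) * xsym c m - to_fract XB * xsym c (m + 2) ^ c)"
      by (rule Lau.loc_dvd_diff[rotated])
    then have "Lau.loc_dvd p (xsym c (m + 1) * xsym c (m + 3))"
      using laurent_upto_recurrence[OF H, of m] n m by simp
    with p loc have "Lau.loc_dvd p (xsym c (m + 1)) \<or> Lau.loc_dvd p (xsym c (m + 3))"
      by (simp add: Lau.loc_dvd_mult_cases)
    with d p coprime_xsym_succ[OF H, of "m + 1"] coprime_xsym_succ[OF H, of "m + 2"] n m show False
      by (auto simp: Lau.loc_coprime_def eval_nat_numeral)
  qed
  then show ?thesis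
    unfolding Lau.loc_coprime_def m by (simp add: eval_nat_numeral)
qed

text \<open>With \<open>a, b, d, e, f, g, h = x\<^sub>m\<^sub>+\<^sub>1, \<dots>, x\<^sub>m\<^sub>+\<^sub>7\<close> and \<open>z = x\<^sub>m\<close>, the numerator
  \<open>f h + B g\<^sup>c\<close> of \<open>x\<^sub>m\<^sub>+\<^sub>8 = (f h + B g\<^sup>c) / e\<close> becomes a multiple of \<open>e\<close> after
  multiplication by \<open>d b\<^sup>c a\<close>, which is coprime to \<open>e\<close>.\<close>
lemma recurrence_numerator_identity:
  fixes a b d e f g h z B :: "'a::comm_ring_1"
  assumes R1: "h * d = e * g + B * f ^ c" and R2: "g * b = d * f + B * e ^ c"
    and R3: "f * a = b * e + B * d ^ c" and R4: "e * z = a * d + B * b ^ c"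
  defines "T \<equiv> B * e ^ (c - 1) * (\<Sum>i<c. (f * d) ^ (c - Suc i) * (d * f + B * e ^ c) ^ i)"
  shows "(f * h + B * g ^ c) * (d * b ^ c * a) =
    e * (a * (f * g * b ^ c + B * d * T) + B * f ^ c * b ^ (c + 1) + B * f ^ c * d ^ c * z)"
proof -
  have gb: "(g * b) ^ c = (f * d) ^ c + e * T"
  proof (cases c)
    case 0
    then show ?thesis by (simp add: T_def)
  next
    case (Suc k)
    have "(d * f + B * e ^ c) ^ c - (f * d) ^ c
        = ((d * f + B * e ^ c) - f * d) * (\<Sum>i<c. (f * d) ^ (c - Suc i) * (d * f + B * e ^ c) ^ i)"
      by (rule power_diff_sumr2)
    also have "(d * f + B * e ^ c) - f * d = e * (B * e ^ (c - 1))"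
      using Suc by (simp add: algebra_simps)
    finally show ?thesis unfolding T_def R2 by (simp add: algebra_simps)
  qed
  have "(f * h + B * g ^ c) * (d * b ^ c * a) = f * b ^ c * a * (h * d) + B * d * a * (g * b) ^ c"
    by (simp add: algebra_simps power_mult_distrib)
  also have "\<dots> = e * (a * (f * g * b ^ c + B * d * T)) + B * f ^ c * (b ^ c * (f * a) + a * d * d ^ c)"
    unfolding R1 gb by (simp add: algebra_simps power_mult_distrib)
  also have "\<dots> = e * (a * (f * g * b ^ c + B * d * T)) + B * f ^ c * (e * b * b ^ c + d ^ c * (e * z))"
    unfolding R3 R4 by (simp add: algebra_simps)
  also have "\<dots> = e * (a * (f * g * b ^ c + B * d * T) + B * f ^ c * b ^ (c + 1) + B * f ^ c * d ^ c * z)"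
    by (simp add: algebra_simps)
  finally show ?thesis .
qed

lemma coprime_xsym_product:
  assumes H: "laurent_upto c (m + 7)"
  shows "Lau.loc_coprime (xsym c (m + 4)) (xsym c (m + 3) * xsym c (m + 2) ^ c * xsym c (m + 1))"
  unfolding Lau.loc_coprime_def
proof (intro allI impI notI)
  fix p assume p: "Lau.loc_prime p"
    and d: "Lau.loc_dvd p (xsym c (m + 4)) \<and> Lau.loc_dvd p (xsym c (m + 3) * xsym c (m + 2) ^ c * xsym c (m + 1))"
  have loc: "xsym c j \<in> Lau.loc" if "j \<le> m + 7" for j
    using laurent_uptoD(1)[OF H that] .
  have loc3: "xsym c (m + 3) \<in> Lau.loc" and loc2: "xsym c (m + 2) ^ c \<in> Lau.loc"
    and loc1: "xsym c (m + 1) \<in> Lau.loc"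
    using loc Lau.loc_power by simp_all
  have "Lau.loc_dvd p (xsym c (m + 3) * xsym c (m + 2) ^ c) \<or> Lau.loc_dvd p (xsym c (m + 1))"
    using d by (intro Lau.loc_dvd_mult_cases[OF p Lau.loc_mult[OF loc3 loc2] loc1]) simp
  then have "Lau.loc_dvd p (xsym c (m + 3)) \<or> Lau.loc_dvd p (xsym c (m + 2) ^ c) \<or> Lau.loc_dvd p (xsym c (m + 1))"
    using Lau.loc_dvd_mult_cases[OF p loc3 loc2] by blast
  then show False
  proof (elim disjE)
    assume "Lau.loc_dvd p (xsym c (m + 3))"
    with d p coprime_xsym_succ[OF H, of "m + 3"] show False
      by (auto simp: Lau.loc_coprime_def eval_nat_numeral)
  next
    assume d2: "Lau.loc_dvd p (xsym c (m + 2) ^ c)"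
    then have "c \<noteq> 0" using Lau.not_loc_dvd_1[OF p] by (metis power_0)
    moreover have "Lau.loc_dvd p (xsym c (m + 2))"
      using Lau.loc_dvd_power_imp[OF p _ d2] loc by simp
    ultimately show False
      using d p coprime_xsym_add_2[OF H, of "m + 2"] by (auto simp: Lau.loc_coprime_def eval_nat_numeral)
  next
    assume "Lau.loc_dvd p (xsym c (m + 1))"
    with d p coprime_xsym_add_3[OF H, of "m + 1"] show False
      by (auto simp: Lau.loc_coprime_def eval_nat_numeral)
  qed
qed

lemma xsym_numerator_multiple:
  assumes H: "laurent_upto c (m + 7)"
  shows "\<exists>Q\<in>Lau.loc. (xsym c (m + 5) * xsym c (m + 7) + to_fract XB * xsym c (m + 6) ^ c)
    * (xsym c (m + 3) * xsym c (m + 2) ^ c * xsym c (m + 1)) = xsym c (m + 4) * Q"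
proof -
  let ?a = "xsym c (m + 1)" and ?b = "xsym c (m + 2)" and ?d = "xsym c (m + 3)" and ?e = "xsym c (m + 4)"
    and ?f = "xsym c (m + 5)" and ?g = "xsym c (m + 6)" and ?h = "xsym c (m + 7)" and ?z = "xsym c m"
    and ?B = "to_fract XB"
  have idx: "m + 3 + 4 = m + 7" "m + 3 + 1 = m + 4" "m + 3 + 3 = m + 6" "m + 3 + 2 = m + 5"
    "m + 2 + 4 = m + 6" "m + 2 + 1 = m + 3" "m + 2 + 3 = m + 5" "m + 2 + 2 = m + 4"
    "m + 1 + 4 = m + 5" "m + 1 + 1 = m + 2" "m + 1 + 3 = m + 4" "m + 1 + 2 = m + 3"
    by simp_all
  have R1: "?h * ?d = ?e * ?g + ?B * ?f ^ c"
    using laurent_upto_recurrence[OF H, of "m + 3"] unfolding idx by (simp add: mult.commute)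
  have R2: "?g * ?b = ?d * ?f + ?B * ?e ^ c"
    using laurent_upto_recurrence[OF H, of "m + 2"] unfolding idx by (simp add: mult.commute)
  have R3: "?f * ?a = ?b * ?e + ?B * ?d ^ c"
    using laurent_upto_recurrence[OF H, of "m + 1"] unfolding idx by (simp add: mult.commute)
  have R4: "?e * ?z = ?a * ?d + ?B * ?b ^ c"
    using laurent_upto_recurrence[OF H, of m] by (simp add: mult.commute)
  define T where "T = ?B * ?e ^ (c - 1) * (\<Sum>i<c. (?f * ?d) ^ (c - Suc i) * (?d * ?f + ?B * ?e ^ c) ^ i)"
  define Q where "Q = ?a * (?f * ?g * ?b ^ c + ?B * ?d * T) + ?B * ?f ^ c * ?b ^ (c + 1) + ?B * ?f ^ c * ?d ^ c * ?z"
  have "Q \<in> Lau.loc"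
    unfolding Q_def T_def using laurent_uptoD(1)[OF H]
    by (intro Lau.loc_add Lau.loc_mult Lau.loc_power Lau.loc_sum Lau.to_fract_in_loc) simp_all
  moreover have "(?f * ?h + ?B * ?g ^ c) * (?d * ?b ^ c * ?a) = ?e * Q"
    unfolding Q_def T_def by (rule recurrence_numerator_identity[OF R1 R2 R3 R4])
  ultimately show ?thesis by (simp add: mult.commute[of ?f] bexI[of _ Q])
qed

lemma xsym_in_loc_step_large:
  assumes H: "laurent_upto c (m + 7)"
  shows "xsym c (m + 8) \<in> Lau.loc"
proof -
  let ?N = "xsym c (m + 5) * xsym c (m + 7) + to_fract XB * xsym c (m + 6) ^ c"
  have loc: "xsym c j \<in> Lau.loc" if "j \<le> m + 7" for j
    using laurent_uptoD(1)[OF H that] .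
  obtain Q where "Q \<in> Lau.loc"
    and eq: "?N * (xsym c (m + 3) * xsym c (m + 2) ^ c * xsym c (m + 1)) = xsym c (m + 4) * Q"
    using xsym_numerator_multiple[OF H] by blast
  moreover have "?N \<in> Lau.loc" "xsym c (m + 3) * xsym c (m + 2) ^ c * xsym c (m + 1) \<in> Lau.loc"
    by (intro Lau.loc_add Lau.loc_mult Lau.loc_power Lau.to_fract_in_loc loc; simp)+
  ultimately obtain q where q: "q \<in> Lau.loc" "?N = xsym c (m + 4) * q"
    using Lau.loc_dvd_cancel[OF loc _ _ _ laurent_uptoD(3)[OF H] eq coprime_xsym_product[OF H]] by auto
  have idx: "m + 4 + 4 = m + 8" "m + 4 + 1 = m + 5" "m + 4 + 2 = m + 6" "m + 4 + 3 = m + 7"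
    by simp_all
  have "xsym c (m + 8) = ?N / xsym c (m + 4)"
    using xsym_step[of c "m + 4"] unfolding idx .
  with q laurent_uptoD(3)[OF H, of "m + 4"] show ?thesis by simp
qed

lemma xsym_in_loc_step:
  assumes H: "laurent_upto c (t + 3)"
  shows "xsym c (t + 4) \<in> Lau.loc"
proof (cases "t < 4")
  case True
  have "X0 dvd X_prod ^ 1" "X1 dvd X_prod ^ 1" "X2 dvd X_prod ^ 1" "X3 dvd X_prod ^ 1"
    unfolding X_prod_def by (simp_all add: mult_ac)
  moreover have "t = 0 \<or> t = 1 \<or> t = 2 \<or> t = 3" using True by auto
  ultimately have "inverse (xsym c t) \<in> Lau.loc"
    using Lau.inverse_to_fract_in_loc[of _ 1] by (auto simp: xsym_initial xsym.simps)
  moreover have "xsym c (t + 1) * xsym c (t + 3) + to_fract XB * xsym c (t + 2) ^ c \<in> Lau.loc"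
    using laurent_uptoD(1)[OF H]
    by (intro Lau.loc_add Lau.loc_mult Lau.loc_power Lau.to_fract_in_loc) simp_all
  ultimately show ?thesis
    unfolding xsym_step[of c t] divide_inverse by (rule Lau.loc_mult[rotated])
next
  case False
  then obtain m where "t = m + 4" by (metis add.commute le_add_diff_inverse not_less)
  with H xsym_in_loc_step_large[of c m] show ?thesis by (simp add: add.assoc)
qed

lemma eval_at_1_xsym_step:
  assumes H: "laurent_upto c (t + 3)" and loc: "xsym c (t + 4) \<in> Lau.loc"
  shows "eval_at_1 (xsym c (t + 4)) = 1"
proof -
  note E = laurent_uptoD[OF H]
  have "eval_at_1 (xsym c (t + 4)) = eval_at_1 (xsym c (t + 4) * xsym c t)"
    using E(2)[of t] by (simp add: eval_at_1_mult[OF loc E(1)])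
  also have "\<dots> = eval_at_1 (xsym c (t + 1) * xsym c (t + 3) + to_fract XB * xsym c (t + 2) ^ c)"
    using laurent_upto_recurrence[OF H, of t] by simp
  also have "\<dots> = 1"
    using E Lau.to_fract_in_loc
    by (simp add: eval_at_1_add eval_at_1_mult eval_at_1_power Lau.loc_mult Lau.loc_power
        eval_at_1_to_fract eval5_vars)
  finally show ?thesis .
qed

lemma xsym_laurent: "xsym c n \<in> Lau.loc \<and> eval_at_1 (xsym c n) = 1"
proof (induction n rule: less_induct)
  case (less n)
  show ?case
  proof (cases "n < 4")
    case True
    then have "n = 0 \<or> n = 1 \<or> n = 2 \<or> n = 3" by auto
    then show ?thesis
      by (auto simp: xsym_initial xsym.simps Lau.to_fract_in_loc eval_at_1_to_fract eval5_vars)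
  next
    case False
    then obtain t where n: "n = t + 4" by (metis add.commute le_add_diff_inverse not_less)
    then have "laurent_upto c (t + 3)"
      using less.IH unfolding laurent_upto_def by auto
    then show ?thesis
      using n xsym_in_loc_step eval_at_1_xsym_step by blast
  qed
qed

lemma xsym_nonzero: "xsym c n \<noteq> 0"
  using xsym_laurent[of c n] eval_at_1_to_fract[of 0] by (auto simp: ring_hom_0[OF is_ring_hom_eval5])

lemma xnat_eq_eval_xsym:
  assumes u: "\<forall>i. u $ i \<noteq> 0"
  shows "(\<forall>j<n. xnat c \<beta> u j \<noteq> 0) \<Longrightarrow> xnat c \<beta> u n = Lau.loc_eval (eval5 u \<beta>) (xsym c n)"
proof (induction n rule: less_induct)
  case (less n)
  have hu: "eval5 u \<beta> X_prod \<noteq> 0" using u by (simp add: eval5_X_prod)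
  note loc = xsym_laurent[THEN conjunct1]
  note ev = Lau.loc_eval_to_fract[OF is_ring_hom_eval5 hu] Lau.loc_eval_add[OF is_ring_hom_eval5 hu]
    Lau.loc_eval_mult[OF is_ring_hom_eval5 hu] Lau.loc_eval_power[OF is_ring_hom_eval5 hu]
  show ?case
  proof (cases "n < 4")
    case True
    then have "n = 0 \<or> n = 1 \<or> n = 2 \<or> n = 3" by auto
    then show ?thesis
      by (auto simp: xsym_initial xsym.simps xnat_initial[simplified] ev eval5_vars)
  next
    case False
    then obtain t where t: "n = t + 4" by (metis add.commute le_add_diff_inverse not_less)
    have IH: "xnat c \<beta> u j = Lau.loc_eval (eval5 u \<beta>) (xsym c j)" if "j < n" for j
      using less that by auto
    let ?ev = "Lau.loc_eval (eval5 u \<beta>)"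
    have "xsym c n * xsym c t = xsym c (t + 1) * xsym c (t + 3) + to_fract XB * xsym c (t + 2) ^ c"
      unfolding t by (rule xsym_recurrence[OF xsym_nonzero])
    then have "?ev (xsym c n * xsym c t) = ?ev (xsym c (t + 1) * xsym c (t + 3) + to_fract XB * xsym c (t + 2) ^ c)"
      by simp
    then have "?ev (xsym c n) * ?ev (xsym c t) = ?ev (xsym c (t + 1)) * ?ev (xsym c (t + 3)) + \<beta> * ?ev (xsym c (t + 2)) ^ c"
      by (simp add: ev loc Lau.loc_mult Lau.loc_power Lau.to_fract_in_loc eval5_vars)
    then have "?ev (xsym c n) * xnat c \<beta> u t
        = xnat c \<beta> u (t + 1) * xnat c \<beta> u (t + 3) + \<beta> * xnat c \<beta> u (t + 2) ^ c"
      using IH[of t] IH[of "t + 1"] IH[of "t + 2"] IH[of "t + 3"] t by simp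
    moreover have "xnat c \<beta> u t \<noteq> 0" using less.prems t by simp
    ultimately show ?thesis
      unfolding t xnat_step by (simp add: field_simps)
  qed
qed

lemma xnat_laurent:
  "\<exists>L\<in>laurent. \<forall>u \<beta>. (\<forall>i. u $ i \<noteq> 0) \<longrightarrow> (\<forall>j<n. xnat c \<beta> u j \<noteq> 0) \<longrightarrow> xnat c \<beta> u n = L u \<beta>"
proof -
  obtain L where "L \<in> laurent" and L: "\<forall>u \<beta>. (\<forall>i. u $ i \<noteq> 0) \<longrightarrow> L u \<beta> = Lau.loc_eval (eval5 u \<beta>) (xsym c n)"
    using laurent_of_loc[OF xsym_laurent[THEN conjunct1]] by blast
  show ?thesis
  proof (intro bexI[of _ L] allI impI)
    fix u \<beta> assume u: "\<forall>i. u $ i \<noteq> 0" and nz: "\<forall>j<n. xnat c \<beta> u j \<noteq> 0"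
    show "xnat c \<beta> u n = L u \<beta>"
      using xnat_eq_eval_xsym[OF u nz] L u by simp
  qed fact
qed

lemma nonzero_initial_if_xnat_nonzero:
  assumes "\<forall>j\<le>3. xnat c \<beta> u j \<noteq> 0"
  shows "\<forall>i. u $ i \<noteq> 0"
  using assms[rule_format, of 0] assms[rule_format, of 1] assms[rule_format, of 2] assms[rule_format, of 3]
  unfolding forall_4_from_0 xnat_initial by simp

lemma xseq_initial: "xseq c \<beta> u 0 = u $ 0" "xseq c \<beta> u 1 = u $ 1" "xseq c \<beta> u 2 = u $ 2" "xseq c \<beta> u 3 = u $ 3"
  using xseq_of_nat[of c \<beta> u 0] xseq_of_nat[of c \<beta> u 1] xseq_of_nat[of c \<beta> u 2] xseq_of_nat[of c \<beta> u 3]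
    xnat_initial[of c \<beta> u]
  by simp_all

definition rev4 :: "complex^4 \<Rightarrow> complex^4" where
  "rev4 u = (\<chi> i. u $ (3 - i))"

lemma rev4_rev4: "rev4 (rev4 u) = u"
  by (simp add: rev4_def vec_eq_iff)

lemma phiinv_eq_rev4: "phiinv c \<beta> u = rev4 (phi c \<beta> (rev4 u))"
  unfolding vec_eq_iff forall_4_from_0 by (simp add: rev4_def phi_def phiinv_def mult.commute)

lemma phiinv_power_eq_rev4: "(phiinv c \<beta> ^^ p) u = rev4 ((phi c \<beta> ^^ p) (rev4 u))"
  by (induction p) (simp_all add: rev4_rev4 phiinv_eq_rev4)

lemma xnat_rev4: "xnat c \<beta> (rev4 u) j = xseq c \<beta> u (3 - int j)"
proof (cases "j \<le> 3")
  case True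
  then have "j = 0 \<or> j = 1 \<or> j = 2 \<or> j = 3" by auto
  then show ?thesis
    by (elim disjE) (simp_all add: xnat_initial[simplified] xseq_initial rev4_def)
next
  case False
  then obtain p where j: "j = p + 3" and "p > 0"
    by (metis add.commute le_add_diff_inverse nat_le_linear not_gr0 add_0 order.refl)
  then have "xnat c \<beta> (rev4 u) j = ((phiinv c \<beta> ^^ p) u) $ 0"
    by (simp add: phiinv_power_eq_rev4 rev4_def phi_power_nth)
  with j \<open>p > 0\<close> show ?thesis by (simp add: xseq_def)
qed

lemma laurent_rev4: "f \<in> laurent \<Longrightarrow> (\<lambda>x b. f (rev4 x) b) \<in> laurent"
proof (induction rule: laurent.induct)
  case (var i)
  show ?case unfolding rev4_def vec_lambda_beta by (rule laurent.var)
next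
  case (inv i)
  show ?case unfolding rev4_def vec_lambda_beta by (rule laurent.inv)
qed (use laurent.const laurent.par laurent.add laurent.mult in auto)

lemma xseq_laurent_nonneg:
  "\<exists>L\<in>laurent. \<forall>u \<beta>. (\<forall>k. 0 \<le> k \<and> k \<le> max (int m) 3 \<longrightarrow> xseq c \<beta> u k \<noteq> 0) \<longrightarrow>
    xseq c \<beta> u (int m) = L u \<beta>"
proof -
  obtain L where "L \<in> laurent" and L:
    "\<And>u \<beta>. \<forall>i. u $ i \<noteq> 0 \<Longrightarrow> \<forall>j<m. xnat c \<beta> u j \<noteq> 0 \<Longrightarrow> xnat c \<beta> u m = L u \<beta>"
    using xnat_laurent[of m c] by blast
  have "\<forall>u \<beta>. (\<forall>k. 0 \<le> k \<and> k \<le> max (int m) 3 \<longrightarrow> xseq c \<beta> u k \<noteq> 0) \<longrightarrow> xseq c \<beta> u (int m) = L u \<beta>"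
  proof (intro allI impI)
    fix u \<beta> assume hyp: "\<forall>k. 0 \<le> k \<and> k \<le> max (int m) 3 \<longrightarrow> xseq c \<beta> u k \<noteq> 0"
    have nz: "xnat c \<beta> u j \<noteq> 0" if "j \<le> 3 \<or> j < m" for j
      using hyp[rule_format, of "int j"] that by (auto simp: xseq_of_nat le_max_iff_disj)
    then have "\<forall>i. u $ i \<noteq> 0"
      by (intro nonzero_initial_if_xnat_nonzero[of c \<beta>]) simp
    with nz show "xseq c \<beta> u (int m) = L u \<beta>"
      using L by (simp add: xseq_of_nat)
  qed
  then show ?thesis using \<open>L \<in> laurent\<close> by (rule bexI[of _ L])
qed

lemma xseq_laurent_neg:
  assumes "p \<ge> 1"
  shows "\<exists>L\<in>laurent. \<forall>u \<beta>. (\<forall>k. - int p \<le> k \<and> k \<le> 3 \<longrightarrow> xseq c \<beta> u k \<noteq> 0) \<longrightarrow>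
    xseq c \<beta> u (- int p) = L u \<beta>"
proof -
  obtain L where "L \<in> laurent" and L:
    "\<And>u \<beta>. \<forall>i. u $ i \<noteq> 0 \<Longrightarrow> \<forall>j<p + 3. xnat c \<beta> u j \<noteq> 0 \<Longrightarrow> xnat c \<beta> u (p + 3) = L u \<beta>"
    using xnat_laurent[of "p + 3" c] by blast
  have "\<forall>u \<beta>. (\<forall>k. - int p \<le> k \<and> k \<le> 3 \<longrightarrow> xseq c \<beta> u k \<noteq> 0) \<longrightarrow> xseq c \<beta> u (- int p) = L (rev4 u) \<beta>"
  proof (intro allI impI)
    fix u \<beta> assume hyp: "\<forall>k. - int p \<le> k \<and> k \<le> 3 \<longrightarrow> xseq c \<beta> u k \<noteq> 0"
    have nz: "xnat c \<beta> (rev4 u) j \<noteq> 0" if "j < p + 3" for j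
      using hyp[rule_format, of "3 - int j"] that by (simp add: xnat_rev4)
    then have "\<forall>i. rev4 u $ i \<noteq> 0"
      using assms by (intro nonzero_initial_if_xnat_nonzero[of c \<beta>]) simp
    with nz have "xnat c \<beta> (rev4 u) (p + 3) = L (rev4 u) \<beta>"
      using L by blast
    then show "xseq c \<beta> u (- int p) = L (rev4 u) \<beta>"
      using xnat_rev4[of c \<beta> u "p + 3"] by simp
  qed
  then show ?thesis using laurent_rev4[OF \<open>L \<in> laurent\<close>] by (rule bexI[of _ "\<lambda>x b. L (rev4 x) b"])
qed

lemma xseq_laurent:
  "\<exists>L\<in>laurent. \<forall>u \<beta>. (\<forall>k. min n 0 \<le> k \<and> k \<le> max n 3 \<longrightarrow> xseq c \<beta> u k \<noteq> 0) \<longrightarrow> xseq c \<beta> u n = L u \<beta>"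
proof (cases "0 \<le> n")
  case True
  then obtain m where "n = int m" by (metis nonneg_eq_int)
  then show ?thesis using xseq_laurent_nonneg[of m c] by simp
next
  case False
  define p where "p = nat (- n)"
  with False have "n = - int p" "p \<ge> 1" by simp_all
  then show ?thesis using xseq_laurent_neg[of p c] by simp
qed

theorem proposition3p1:
  fixes c :: nat
  shows
    \<comment> \<open>(i) Laurent property\<close>
    "(\<forall>n::int. \<exists>L\<in>laurent. \<forall>u \<beta>.
        (\<forall>k::int. min n 0 \<le> k \<and> k \<le> max n 3 \<longrightarrow> xseq c \<beta> u k \<noteq> 0)
          \<longrightarrow> xseq c \<beta> u n = L u \<beta>)
   \<and> \<comment> \<open>(ii) singularity confinement\<close>
     (\<forall>(\<beta>::complex) (u::complex \<Rightarrow> complex^4) (p::complex^4).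
        (u \<longlongrightarrow> p) (at 0) \<longrightarrow> (\<forall>i. p $ i \<noteq> 0)
        \<longrightarrow> (\<forall>\<^sub>F \<epsilon> in at 0. xseq c \<beta> (u \<epsilon>) 4 = \<epsilon>)
        \<longrightarrow> Bfun (\<lambda>\<epsilon>. xseq c \<beta> (u \<epsilon>) 8) (at 0))
   \<and> \<comment> \<open>(iii) phi is Poisson for the log-canonical bracket\<close>
     (\<forall>\<beta> x i j. x $ 0 \<noteq> 0 \<longrightarrow>
        pbr c (\<lambda>y. phi c \<beta> y $ i) (\<lambda>y. phi c \<beta> y $ j) x = lc_bracket c (phi c \<beta> x) $ i $ j)
   \<and> \<comment> \<open>(iii) nondegeneracy for c \<noteq> 2\<close>
     (c \<noteq> 2 \<longrightarrow> (\<forall>x. (\<forall>i. x $ i \<noteq> 0) \<longrightarrow> det (lc_bracket c x) \<noteq> 0))"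
  by (intro conjI allI impI;
      rule xseq_laurent singularity_confinement phi_poisson det_lc_bracket_nonzero; assumption)

end
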